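(* Consider a repeated $N$-player game with profit parameter $r>1$ in which, in each round, each player chooses cooperation ($c$) or defection ($d$); if $b$ players cooperate in a round, each cooperator receives $\frac{rb}{N}$ and each defector receives $\frac{rb}{N}+1$. Let a ZD alliance $\mathcal{A}$ consist of $n^{\mathcal{A}}$ players that always take the same action, and let the remaining $N-n^{\mathcal{A}}$ players be the outsiders. Suppose the alliance uses a zero-determinant strategy enforcing the linear relation $\pi^{-\mathcal{A}}=\chi\,\pi^{\mathcal{A}}+(1-\chi)\,l$ with $\chi=0$, where $\pi^{\mathcal{A}}$ and $\pi^{-\mathcal{A}}$ are the expected (stationary) per-member utilities of the alliance and of the outsiders. If $\frac{r-1}{2r}N<n^{\mathcal{A}}\le\frac{r-1}{r}N$, then the expected utility of the outsiders satisfies $$\frac{r\,(N-n^{\mathcal{A}})}{N}\le \pi^{-\mathcal{A}}\le \frac{r\,n^{\mathcal{A}}}{N}+1 .$$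
   Context: Per-outcome average payoffs: when the alliance plays $s\in\{c,d\}$ and there are $b$ cooperators in total, an alliance member gets $g^{\mathcal{A}}_{c,b}=\frac{rb}{N}$ ($n^{\mathcal{A}}\le b\le N$) or $g^{\mathcal{A}}_{d,b}=\frac{rb}{N}+1$ ($0\le b\le N-n^{\mathcal{A}}$), and the average outsider payoff is $g^{-\mathcal{A}}_{c,b}=\frac{(b-n^{\mathcal{A}})\frac{rb}{N}+(N-b)(\frac{rb}{N}+1)}{N-n^{\mathcal{A}}}$ ($n^{\mathcal{A}}\le b\le N$) or $g^{-\mathcal{A}}_{d,b}=\frac{b\frac{rb}{N}+(N-n^{\mathcal{A}}-b)(\frac{rb}{N}+1)}{N-n^{\mathcal{A}}}$ ($0\le b\le N-n^{\mathcal{A}}$). The game is sequential: the alliance members are among the first movers (leaders), whose cooperation probabilities depend on the previous round's outcome, while followers condition on the leaders' current moves. A zero-determinant strategy of the alliance is a strategy vector proportional to $\chi(\mathbf{g}^{\mathcal{A}}-l\mathbf{1})-(\mathbf{g}^{-\mathcal{A}}-l\mathbf{1})$, which forces $\pi^{-\mathcal{A}}=\chi\pi^{\mathcal{A}}+(1-\chi)l$ for the stationary distribution of the induced Markov chain; with $\chi=0$ this sets $\pi^{-\mathcal{A}}=l$. *)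

theory Defs
  imports Complex_Main
begin

text \<open>Outcome states of a round: (s, b) where s = True means the alliance plays c,
  s = False means it plays d, and b is the total number of cooperators.\<close>

definition outcomes :: "nat \<Rightarrow> nat \<Rightarrow> (bool \<times> nat) set" where
  "outcomes N nA = {(True, b) | b. nA \<le> b \<and> b \<le> N} \<union> {(False, b) | b. b \<le> N - nA}"

definition gA :: "real \<Rightarrow> nat \<Rightarrow> nat \<Rightarrow> bool \<times> nat \<Rightarrow> real" where
  "gA r N nA sb = (case sb of (s, b) \<Rightarrow>
      if s then r * real b / real N else r * real b / real N + 1)"

definition gO :: "real \<Rightarrow> nat \<Rightarrow> nat \<Rightarrow> bool \<times> nat \<Rightarrow> real" where
  "gO r N nA sb = (case sb of (s, b) \<Rightarrow>
      if s then ((real b - real nA) * (r * real b / real N)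
                 + (real N - real b) * (r * real b / real N + 1)) / (real N - real nA)
      else (real b * (r * real b / real N)
                 + (real N - real nA - real b) * (r * real b / real N + 1)) / (real N - real nA))"

text \<open>The alliance's (memory-one, leader) strategy p gives the cooperation probability
  in the next round after each outcome. It is a zero-determinant strategy enforcing
  pi^{-A} = chi pi^A + (1 - chi) l if the vector p~ (p~(c,b) = p(c,b) - 1,
  p~(d,b) = p(d,b)) is a nonzero multiple of chi (g^A - l 1) - (g^{-A} - l 1).\<close>
definition zd_strategy ::
  "real \<Rightarrow> nat \<Rightarrow> nat \<Rightarrow> real \<Rightarrow> real \<Rightarrow> (bool \<times> nat \<Rightarrow> real) \<Rightarrow> bool" where
  "zd_strategy r N nA chi l p \<longleftrightarrow>
     (\<forall>x\<in>outcomes N nA. 0 \<le> p x \<and> p x \<le> 1) \<and>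
     (\<exists>\<phi>. \<phi> \<noteq> 0 \<and> (\<forall>x\<in>outcomes N nA.
        p x - (if fst x then 1 else 0)
          = \<phi> * (chi * (gA r N nA x - l) - (gO r N nA x - l))))"

text \<open>v is a stationary distribution (over outcomes) of a Markov chain in which the
  alliance (a leader) cooperates with probability p(previous outcome). Stationarity
  implies that the probability the alliance cooperates in the current round equals
  the probability it cooperates in the next round.\<close>
definition stationary_for_alliance ::
  "nat \<Rightarrow> nat \<Rightarrow> (bool \<times> nat \<Rightarrow> real) \<Rightarrow> (bool \<times> nat \<Rightarrow> real) \<Rightarrow> bool" where
  "stationary_for_alliance N nA p v \<longleftrightarrow>
     (\<forall>x\<in>outcomes N nA. 0 \<le> v x) \<and>
     (\<Sum>x\<in>outcomes N nA. v x) = 1 \<and>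
     (\<Sum>x\<in>outcomes N nA. v x * p x) = (\<Sum>x\<in>outcomes N nA. if fst x then v x else 0)"

definition pi_alliance :: "real \<Rightarrow> nat \<Rightarrow> nat \<Rightarrow> (bool \<times> nat \<Rightarrow> real) \<Rightarrow> real" where
  "pi_alliance r N nA v = (\<Sum>x\<in>outcomes N nA. v x * gA r N nA x)"

definition pi_outsiders :: "real \<Rightarrow> nat \<Rightarrow> nat \<Rightarrow> (bool \<times> nat \<Rightarrow> real) \<Rightarrow> real" where
  "pi_outsiders r N nA v = (\<Sum>x\<in>outcomes N nA. v x * gO r N nA x)"

end

theory Submission
  imports Defs
begin

text \<open>Stationarity makes the expected value of the vector p~ vanish, so the ZD relation holds for
  the stationary payoffs; with \<open>chi = 0\<close> the outsiders are pinned at \<open>l\<close>. Whether such a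
  strategy exists is a sign condition: p~ is \<open>\<le> 0\<close> after the alliance cooperated and \<open>\<ge> 0\<close>
  after it defected. A negative factor \<open>\<phi>\<close> would force \<open>r \<le> l \<le> 1\<close> (outcomes (c, N) and
  (d, 0)), so \<open>\<phi> > 0\<close>, and the outcomes (c, nA) and (d, N - nA) then bound \<open>l\<close> by exactly
  the two claimed values.\<close>

lemma zd_strategy_enforces_linear_relation:
  assumes "zd_strategy r N nA chi l p"
    and "stationary_for_alliance N nA p v"
  shows "pi_outsiders r N nA v = chi * pi_alliance r N nA v + (1 - chi) * l"
proof -
  let ?O = "outcomes N nA"
  obtain \<phi> where "\<phi> \<noteq> 0" and p_tilde: "\<And>x. x \<in> ?O \<Longrightarrow>
      p x - (if fst x then 1 else 0) = \<phi> * (chi * (gA r N nA x - l) - (gO r N nA x - l))"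
    using assms(1) unfolding zd_strategy_def by blast
  have total: "(\<Sum>x\<in>?O. v x) = 1"
    and balance: "(\<Sum>x\<in>?O. v x * p x) = (\<Sum>x\<in>?O. if fst x then v x else 0)"
    using assms(2) unfolding stationary_for_alliance_def by auto
  have "0 = (\<Sum>x\<in>?O. v x * p x) - (\<Sum>x\<in>?O. if fst x then v x else 0)"
    using balance by simp
  also have "\<dots> = (\<Sum>x\<in>?O. v x * (p x - (if fst x then 1 else 0)))"
    by (simp add: sum_subtractf[symmetric] algebra_simps if_distrib cong: if_cong)
  also have "\<dots> = (\<Sum>x\<in>?O. \<phi> * (chi * (v x * gA r N nA x) - v x * gO r N nA x + (1 - chi) * l * v x))"
    by (rule sum.cong) (auto simp: p_tilde algebra_simps)
  also have "\<dots> = \<phi> * (chi * pi_alliance r N nA v - pi_outsiders r N nA v + (1 - chi) * l)"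
    unfolding pi_alliance_def pi_outsiders_def
    by (simp add: sum_distrib_left[symmetric] sum.distrib sum_subtractf total)
  finally show ?thesis
    using \<open>\<phi> \<noteq> 0\<close> by simp
qed

lemma gO_cooperating_alliance:
  assumes "nA < N"
  shows "gO r N nA (True, b) = r * real b / real N + (real N - real b) / (real N - real nA)"
  using assms by (simp add: gO_def field_simps)

lemma gO_defecting_alliance:
  assumes "nA < N"
  shows "gO r N nA (False, b) = r * real b / real N + (real N - real nA - real b) / (real N - real nA)"
  using assms by (simp add: gO_def field_simps)

lemma equalizer_sign_conditions:
  assumes "zd_strategy r N nA 0 l p"
  obtains \<phi> :: real where "\<phi> \<noteq> 0"
    and "\<And>b. (True, b) \<in> outcomes N nA \<Longrightarrow> \<phi> * (l - gO r N nA (True, b)) \<le> 0"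
    and "\<And>b. (False, b) \<in> outcomes N nA \<Longrightarrow> 0 \<le> \<phi> * (l - gO r N nA (False, b))"
proof -
  obtain \<phi> where "\<phi> \<noteq> 0" and p_tilde: "\<And>x. x \<in> outcomes N nA \<Longrightarrow>
      p x - (if fst x then 1 else 0) = \<phi> * (0 * (gA r N nA x - l) - (gO r N nA x - l))"
    using assms unfolding zd_strategy_def by blast
  moreover have "\<And>x. x \<in> outcomes N nA \<Longrightarrow> 0 \<le> p x \<and> p x \<le> 1"
    using assms unfolding zd_strategy_def by blast
  ultimately show ?thesis
    using that by (fastforce simp: algebra_simps dest: p_tilde)
qed

lemma equalizer_level_bounds:
  assumes "r > 1" and "nA < N"
    and "zd_strategy r N nA 0 l p"
  shows "r * (real N - real nA) / real N \<le> l \<and> l \<le> r * real nA / real N + 1"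
proof -
  obtain \<phi> :: real where "\<phi> \<noteq> 0"
    and coop: "\<And>b. (True, b) \<in> outcomes N nA \<Longrightarrow> \<phi> * (l - gO r N nA (True, b)) \<le> 0"
    and defect: "\<And>b. (False, b) \<in> outcomes N nA \<Longrightarrow> 0 \<le> \<phi> * (l - gO r N nA (False, b))"
    using equalizer_sign_conditions[OF assms(3)] by blast
  have extreme_outcomes: "(True, nA) \<in> outcomes N nA" "(True, N) \<in> outcomes N nA"
      "(False, 0) \<in> outcomes N nA" "(False, N - nA) \<in> outcomes N nA"
    using assms(2) unfolding outcomes_def by auto
  have "\<phi> > 0"
  proof (rule ccontr)
    assume "\<not> \<phi> > 0"
    with \<open>\<phi> \<noteq> 0\<close> have "\<phi> < 0" by simp
    then have "gO r N nA (True, N) \<le> l" and "l \<le> gO r N nA (False, 0)"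
      using coop[OF extreme_outcomes(2)] defect[OF extreme_outcomes(3)]
      by (simp_all add: mult_le_0_iff zero_le_mult_iff)
    moreover have "gO r N nA (True, N) = r" and "gO r N nA (False, 0) = 1"
      using assms(2) by (simp_all add: gO_cooperating_alliance gO_defecting_alliance)
    ultimately show False
      using assms(1) by simp
  qed
  then have "l \<le> gO r N nA (True, nA)" and "gO r N nA (False, N - nA) \<le> l"
    using coop[OF extreme_outcomes(1)] defect[OF extreme_outcomes(4)]
    by (simp_all add: mult_le_0_iff zero_le_mult_iff)
  moreover have "gO r N nA (True, nA) = r * real nA / real N + 1"
    and "gO r N nA (False, N - nA) = r * (real N - real nA) / real N"
    using assms(2) by (simp_all add: gO_cooperating_alliance gO_defecting_alliance of_nat_diff)
  ultimately show ?thesis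
    by simp
qed

theorem theorem2:
  fixes r l :: real and N nA :: nat
    and p v :: "bool \<times> nat \<Rightarrow> real"
  assumes "r > 1"
    and "(r - 1) / (2 * r) * real N < real nA"
    and "real nA \<le> (r - 1) / r * real N"
    and "zd_strategy r N nA 0 l p"
    and "stationary_for_alliance N nA p v"
  shows "r * (real N - real nA) / real N \<le> pi_outsiders r N nA v
       \<and> pi_outsiders r N nA v \<le> r * real nA / real N + 1"
proof -
  \<comment> \<open>The lower bound on \<open>nA\<close> only serves to exclude \<open>N = 0\<close> here; it is exactly the
    condition making the interval of admissible levels \<open>l\<close> nonempty.\<close>
  have "real N > 0"
    using assms(2,3) by (cases N) simp_all
  then have "(r - 1) / r * real N < real N"
    using assms(1) by (simp add: field_simps)
  with assms(3) have "nA < N"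
    by simp
  have "pi_outsiders r N nA v = l"
    using zd_strategy_enforces_linear_relation[OF assms(4,5)] by simp
  then show ?thesis
    using equalizer_level_bounds[OF assms(1) \<open>nA < N\<close> assms(4)] by simp
qed

end
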